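(* Let $[n]=A\cup B$ with $A\cap B=\emptyset$, let $t_1,t_2\ge0$ be integers, let $r\ge1$, and let $\mathcal C$ be an $[n,k]$ linear code over a finite field such that: (1) for every nonempty $E\subseteq A$ with $|E|\le t_1$ there is $i\in E$ having a recovering set $R\subseteq A\setminus E$; (2) for every nonempty $E\subseteq A$ with $|E|\le t_1+t_2+1$ there is $i\in E$ having a recovering set $R\subseteq[n]\setminus E$; (3) for every nonempty $E\subseteq B$ with $|E|\le t_2$ there is $i\in E$ having a recovering set $R\subseteq B\setminus E$; (4) for every nonempty $E\subseteq B$ with $|E|\le t_1+t_2+1$ there is $i\in E$ having a recovering set $R\subseteq[n]\setminus E$; where all recovering sets mentioned have size at most $r$. Then $\mathcal C$ is an $(n,k,r,t)$-SLRC with $t=t_1+t_2+1$.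
   Context: For $i\in[n]$, a recovering set of $i$ is a set $R\subseteq[n]\setminus\{i\}$ such that there exist nonzero field elements $a_j$ ($j\in R$) with $x_i=\sum_{j\in R}a_jx_j$ for all codewords $x\in\mathcal C$. $\mathcal C$ is an $(n,k,r,t)$-SLRC if for every $E\subseteq[n]$ with $|E|\le t$, $E$ can be indexed as $\{i_1,\dots,i_{|E|}\}$ such that each $i_\ell$ has a recovering set $R_\ell\subseteq([n]\setminus E)\cup\{i_1,\dots,i_{\ell-1}\}$ with $|R_\ell|\le r$. *)

theory Defs
  imports "HOL-Analysis.Analysis"
begin

text \<open>Coordinates are indexed by a finite type 'n, playing the role of [n]
  (so n = CARD('n)); codewords are vectors in 'a^'n over a finite field 'a.\<close>

definition linear_code :: "nat \<Rightarrow> ('a::{field,finite} ^ 'n) set \<Rightarrow> bool" where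
  "linear_code k C \<longleftrightarrow> vec.subspace C \<and> vec.dim C = k"

definition recovering_set :: "('a::field ^ 'n) set \<Rightarrow> 'n \<Rightarrow> 'n set \<Rightarrow> bool" where
  "recovering_set C i R \<longleftrightarrow> R \<subseteq> UNIV - {i} \<and>
     (\<exists>a :: 'n \<Rightarrow> 'a. (\<forall>j\<in>R. a j \<noteq> 0) \<and> (\<forall>x\<in>C. x $ i = (\<Sum>j\<in>R. a j * x $ j)))"

definition SLRC :: "nat \<Rightarrow> nat \<Rightarrow> nat \<Rightarrow> ('a::{field,finite} ^ 'n) set \<Rightarrow> bool" where
  "SLRC k r t C \<longleftrightarrow> linear_code k C \<and>
     (\<forall>E :: 'n set. card E \<le> t \<longrightarrow>
        (\<exists>l. distinct l \<and> set l = E \<and>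
           (\<forall>m < length l. \<exists>R. recovering_set C (l ! m) R \<and> card R \<le> r \<and>
                R \<subseteq> (UNIV - E) \<union> set (take m l))))"

end

theory Submission
  imports Defs
begin

text \<open>An erasure pattern E is recovered greedily: as long as some erased coordinate
  has a short recovering set disjoint from the still-erased ones, repair it. If E is
  split along the partition into E \<inter> A and E \<inter> B, then |E| \<le> t1 + t2 + 1 forces
  |E \<inter> A| \<le> t1 or |E \<inter> B| \<le> t2. Say the former: a still-erased set S either meets A
  in at most t1 coordinates, one of which is repaired inside A by (1), or lies
  entirely in B and is handled by (4). The other case is symmetric, using (3) and (2).\<close>

definition recovery_sequence :: "('a::field ^ 'n) set \<Rightarrow> nat \<Rightarrow> 'n set \<Rightarrow> 'n list \<Rightarrow> bool" where
  "recovery_sequence C r E l \<longleftrightarrow> distinct l \<and> set l = E \<and>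
     (\<forall>m < length l. \<exists>R. recovering_set C (l ! m) R \<and> card R \<le> r \<and>
        R \<subseteq> (UNIV - E) \<union> set (take m l))"

lemma SLRC_iff_recovery_sequence:
  "SLRC k r t C \<longleftrightarrow> linear_code k C \<and>
     (\<forall>E. card E \<le> t \<longrightarrow> (\<exists>l. recovery_sequence C r E l))"
  unfolding SLRC_def recovery_sequence_def ..

lemma recovery_sequence_Cons:
  assumes "recovery_sequence C r (E - {i}) l" "i \<in> E"
    and "recovering_set C i R" "card R \<le> r" "R \<subseteq> UNIV - E"
  shows "recovery_sequence C r E (i # l)"
  unfolding recovery_sequence_def
proof (intro conjI allI impI)
  show "distinct (i # l)" "set (i # l) = E"
    using assms(1,2) by (auto simp: recovery_sequence_def)
  fix m assume m: "m < length (i # l)"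
  show "\<exists>R. recovering_set C ((i # l) ! m) R \<and> card R \<le> r \<and>
          R \<subseteq> (UNIV - E) \<union> set (take m (i # l))"
  proof (cases m)
    case 0
    then show ?thesis using assms(3-5) by auto
  next
    case (Suc m')
    with m assms(1) obtain R' where "recovering_set C (l ! m') R'" "card R' \<le> r"
      "R' \<subseteq> (UNIV - (E - {i})) \<union> set (take m' l)"
      by (auto simp: recovery_sequence_def)
    with Suc show ?thesis by auto
  qed
qed

lemma recovery_sequence_exists:
  assumes "finite E"
    and "\<And>S. S \<subseteq> E \<Longrightarrow> S \<noteq> {} \<Longrightarrow>
           \<exists>i\<in>S. \<exists>R. recovering_set C i R \<and> card R \<le> r \<and> R \<subseteq> UNIV - S"
  shows "\<exists>l. recovery_sequence C r E l"
  using assms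
proof (induction E rule: finite_psubset_induct)
  case (psubset E)
  show ?case
  proof (cases "E = {}")
    case True
    then show ?thesis by (auto simp: recovery_sequence_def)
  next
    case False
    with psubset.prems obtain i R where "i \<in> E"
      and R: "recovering_set C i R" "card R \<le> r" "R \<subseteq> UNIV - E" by blast
    with psubset.IH[of "E - {i}"] psubset.prems obtain l
      where "recovery_sequence C r (E - {i}) l" by blast
    with \<open>i \<in> E\<close> R show ?thesis by (blast intro: recovery_sequence_Cons)
  qed
qed

lemma recoverable_if_few_in_part:
  fixes C :: "('a::field ^ 'n) set"
  assumes AB: "A \<union> B = UNIV"
    and inside: "\<And>S. S \<subseteq> A \<Longrightarrow> S \<noteq> {} \<Longrightarrow> card S \<le> s \<Longrightarrow>
               \<exists>i\<in>S. \<exists>R. recovering_set C i R \<and> card R \<le> r \<and> R \<subseteq> A - S"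
    and outside: "\<And>S. S \<subseteq> B \<Longrightarrow> S \<noteq> {} \<Longrightarrow> card S \<le> t \<Longrightarrow>
               \<exists>i\<in>S. \<exists>R. recovering_set C i R \<and> card R \<le> r \<and> R \<subseteq> UNIV - S"
    and few: "card (E \<inter> A) \<le> s"
    and S: "finite E" "S \<subseteq> E" "S \<noteq> {}" "card S \<le> t"
  shows "\<exists>i\<in>S. \<exists>R. recovering_set C i R \<and> card R \<le> r \<and> R \<subseteq> UNIV - S"
proof (cases "S \<inter> A = {}")
  case True
  with AB have "S \<subseteq> B" by auto
  with outside S show ?thesis by blast
next
  case False
  have "card (S \<inter> A) \<le> s"
    using card_mono[of "E \<inter> A" "S \<inter> A"] S few by fastforce
  with inside[OF _ False] obtain i R where "i \<in> S \<inter> A" "recovering_set C i R"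
    "card R \<le> r" "R \<subseteq> A - S \<inter> A" by auto
  then show ?thesis by blast
qed

theorem lemma2:
  fixes C :: "('a::{field,finite} ^ 'n) set"
    and A B :: "'n set"
    and k r t1 t2 :: nat
  assumes AB: "A \<union> B = UNIV" "A \<inter> B = {}"
    and r: "r \<ge> 1"
    and code: "linear_code k C"
    and c1: "\<And>E. E \<subseteq> A \<Longrightarrow> E \<noteq> {} \<Longrightarrow> card E \<le> t1 \<Longrightarrow>
               \<exists>i\<in>E. \<exists>R. recovering_set C i R \<and> card R \<le> r \<and> R \<subseteq> A - E"
    and c2: "\<And>E. E \<subseteq> A \<Longrightarrow> E \<noteq> {} \<Longrightarrow> card E \<le> t1 + t2 + 1 \<Longrightarrow>
               \<exists>i\<in>E. \<exists>R. recovering_set C i R \<and> card R \<le> r \<and> R \<subseteq> UNIV - E"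
    and c3: "\<And>E. E \<subseteq> B \<Longrightarrow> E \<noteq> {} \<Longrightarrow> card E \<le> t2 \<Longrightarrow>
               \<exists>i\<in>E. \<exists>R. recovering_set C i R \<and> card R \<le> r \<and> R \<subseteq> B - E"
    and c4: "\<And>E. E \<subseteq> B \<Longrightarrow> E \<noteq> {} \<Longrightarrow> card E \<le> t1 + t2 + 1 \<Longrightarrow>
               \<exists>i\<in>E. \<exists>R. recovering_set C i R \<and> card R \<le> r \<and> R \<subseteq> UNIV - E"
  shows "SLRC k r (t1 + t2 + 1) C"
  unfolding SLRC_iff_recovery_sequence
proof (intro conjI allI impI code)
  fix E :: "'n set"
  assume E: "card E \<le> t1 + t2 + 1"
  have "card E = card (E \<inter> A) + card (E \<inter> B)"
    using AB by (subst card_Un_disjoint[symmetric]) (auto intro: arg_cong[where f = card])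
  with E have few: "card (E \<inter> A) \<le> t1 \<or> card (E \<inter> B) \<le> t2" by linarith
  show "\<exists>l. recovery_sequence C r E l"
  proof (rule recovery_sequence_exists)
    fix S assume S: "S \<subseteq> E" "S \<noteq> {}"
    with E have "card S \<le> t1 + t2 + 1"
      using card_mono[of E S] by simp
    then show "\<exists>i\<in>S. \<exists>R. recovering_set C i R \<and> card R \<le> r \<and> R \<subseteq> UNIV - S"
      using few
    proof (elim disjE)
      assume "card (E \<inter> A) \<le> t1"
      with S \<open>card S \<le> _\<close> show ?thesis
        by (intro recoverable_if_few_in_part[OF AB(1) c1 c4]) auto
    next
      assume "card (E \<inter> B) \<le> t2"
      with S \<open>card S \<le> _\<close> AB(1) show ?thesis
        by (intro recoverable_if_few_in_part[OF _ c3 c2]) (auto simp: Un_commute)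
    qed
  qed simp
qed

end
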